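(* Let $n\ge1$, $S\subseteq\{1,\ldots,n\}$ nonempty, $j\in\{1,\ldots,|S|\}$ and $k\in\{1,\ldots,n\}$. Then $$I(\mathrm{os}_{j:S},k)=\frac{\binom{k-1}{j-1}\binom{n-k}{|S|-j}}{\binom{n}{|S|}}$$ if $0\le k-j\le n-|S|$, and $I(\mathrm{os}_{j:S},k)=0$ otherwise.
   Context: For nonempty $S\subseteq\{1,\ldots,n\}$ and $j\in\{1,\ldots,|S|\}$, $\mathrm{os}_{j:S}\colon[0,1]^n\to\mathbb{R}$ maps $\mathbf{x}$ to the $j$th smallest of the $x_i$, $i\in S$. For $\mathbf{x}\in[0,1]^n$, $x_{(1)}\le\cdots\le x_{(n)}$ are its coordinates in ascending order, with $x_{(0)}=0$, $x_{(n+1)}=1$. The influence index of a square integrable $f$ on $[0,1]^n$ is $I(f,k)=-(n+1)(n+2)\int_{[0,1]^n}f(\mathbf{x})\,\big(x_{(k+1)}-2x_{(k)}+x_{(k-1)}\big)\,d\mathbf{x}$. *)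

theory Defs
  imports "HOL-Probability.Probability"
begin

text \<open>Points of [0,1]^n are functions x :: nat => real on the index set {1..n}.
  os j S x is the j-th smallest (1-based) of the values x i, i in S (with multiplicity).\<close>
definition os :: "nat \<Rightarrow> nat set \<Rightarrow> (nat \<Rightarrow> real) \<Rightarrow> real" where
  "os j S x = sort (map x (sorted_list_of_set S)) ! (j - 1)"

definition ostat :: "nat \<Rightarrow> (nat \<Rightarrow> real) \<Rightarrow> nat \<Rightarrow> real" where
  "ostat n x k = (if k = 0 then 0 else if k = n + 1 then 1 else os k {1..n} x)"

definition cube :: "nat \<Rightarrow> (nat \<Rightarrow> real) measure" where
  "cube n = PiM {1..n} (\<lambda>_. restrict_space lborel {0..1})"

definition influence :: "nat \<Rightarrow> ((nat \<Rightarrow> real) \<Rightarrow> real) \<Rightarrow> nat \<Rightarrow> real" where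
  "influence n f k = - (real (n + 1) * real (n + 2)) *
     (\<integral>x. f x * (ostat n x (k + 1) - 2 * ostat n x k + ostat n x (k - 1)) \<partial>cube n)"

end

theory Submission
  imports Defs "HOL-Combinatorics.Permutations"
begin

(*
  Permuting coordinates preserves the cube, so I(os_{j:T}, k) depends on T only through |T|,
  and (n choose |S|) * I(os_{j:S}, k) is the influence of the sum of os_{j:T} over all T of
  size |S|. At a point with distinct coordinates, x_(a) is the j-th smallest entry of exactly
  ((a - 1) choose (j - 1)) * ((n - a) choose (|S| - j)) of these subsets, so the sum is a fixed
  combination of the order statistics x_(a). Finally I(x_(a), k) = [a = k]: adjoining two further
  uniform coordinates turns E[x_(a) x_(b)] into the probability of an event that depends only on
  the relative order of the n + 2 coordinates; every order has probability 1/(n + 2)!, and the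
  resulting count of permutations has second difference -[a = b] in b.
*)

section \<open>Order statistics of a finite family\<close>

lemma sorted_nth_less_iff:
  fixes ys :: "'a::linorder list"
  assumes "sorted ys" "q < length ys"
  shows "z < ys ! q \<longleftrightarrow> length (filter (\<lambda>y. y \<le> z) ys) \<le> q"
  using assms
proof (induction ys arbitrary: q)
  case (Cons y ys)
  have y_le: "\<forall>w\<in>set ys. y \<le> w" using Cons.prems(1) by simp
  show ?case
  proof (cases q)
    case 0
    show ?thesis
    proof (cases "y \<le> z")
      case False
      then have "filter (\<lambda>w. w \<le> z) (y # ys) = []" using y_le by (auto simp: filter_empty_conv)
      then show ?thesis using 0 False by simp
    qed (use 0 in simp)
  next
    case (Suc q')
    have q': "q' < length ys" using Cons.prems(2) Suc by simp
    have IH: "z < ys ! q' \<longleftrightarrow> length (filter (\<lambda>y. y \<le> z) ys) \<le> q'"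
      using Cons.IH Cons.prems(1) q' by simp
    show ?thesis
    proof (cases "y \<le> z")
      case False
      then have "filter (\<lambda>w. w \<le> z) (y # ys) = []" using y_le by (auto simp: filter_empty_conv)
      moreover have "z < ys ! q'"
        using False y_le q' by (meson linorder_not_le nth_mem order_less_le_trans)
      ultimately show ?thesis using Suc by simp
    qed (use IH Suc in simp)
  qed
qed simp

lemma less_os_iff:
  assumes "finite T" "1 \<le> j" "j \<le> card T"
  shows "z < os j T x \<longleftrightarrow> card {i\<in>T. x i \<le> z} < j"
proof -
  define xs where "xs = map x (sorted_list_of_set T)"
  have "z < os j T x \<longleftrightarrow> length (filter (\<lambda>y. y \<le> z) (sort xs)) \<le> j - 1"
    unfolding os_def xs_def[symmetric]
    by (rule sorted_nth_less_iff) (use assms in \<open>auto simp: xs_def\<close>)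
  also have "length (filter (\<lambda>y. y \<le> z) (sort xs)) = length (filter (\<lambda>y. y \<le> z) xs)"
    by (metis mset_filter mset_sort size_mset)
  also have "\<dots> = card {i\<in>T. x i \<le> z}"
    unfolding xs_def filter_map length_map
    by (subst distinct_length_filter) (use assms in \<open>auto intro!: arg_cong[where f=card]\<close>)
  finally show ?thesis using assms by linarith
qed

lemma os_in_image:
  assumes "finite T" "1 \<le> j" "j \<le> card T"
  shows "os j T x \<in> x ` T"
proof -
  have "os j T x \<in> set (sort (map x (sorted_list_of_set T)))"
    unfolding os_def by (rule nth_mem) (use assms in auto)
  then show ?thesis using assms by simp
qed

lemma os_eqI:
  assumes "finite T" "1 \<le> j" "j \<le> card T"
    and "\<And>z. z < v \<longleftrightarrow> card {i\<in>T. x i \<le> z} < j"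
  shows "os j T x = v"
proof -
  have iff: "z < os j T x \<longleftrightarrow> z < v" for z
    using less_os_iff[OF assms(1-3)] assms(4) by simp
  show ?thesis
    using iff[of "os j T x"] iff[of v] by (cases "os j T x" v rule: linorder_cases) auto
qed

lemma os_eq_coord:
  assumes "finite T" "1 \<le> j" "j \<le> card T" "i \<in> T"
    and "card {l\<in>T. x l < x i} = j - 1"
  shows "os j T x = x i"
proof (rule os_eqI[OF assms(1-3)])
  fix z
  show "z < x i \<longleftrightarrow> card {l\<in>T. x l \<le> z} < j"
  proof
    assume "z < x i"
    then have "card {l\<in>T. x l \<le> z} \<le> card {l\<in>T. x l < x i}"
      using assms(1) by (intro card_mono) auto
    then show "card {l\<in>T. x l \<le> z} < j" using assms(2,5) by linarith
  next
    assume "card {l\<in>T. x l \<le> z} < j"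
    moreover have "z < x i" if "\<not> z < x i"
    proof -
      have "card (insert i {l\<in>T. x l < x i}) \<le> card {l\<in>T. x l \<le> z}"
        using assms(1,4) that by (intro card_mono) auto
      then show ?thesis using assms(1,2,5) \<open>card {l\<in>T. x l \<le> z} < j\<close> by simp
    qed
    ultimately show "z < x i" by blast
  qed
qed

lemma card_less_os:
  assumes "finite T" "1 \<le> j" "j \<le> card T" "i \<in> T" "inj_on x T" "os j T x = x i"
  shows "card {l\<in>T. x l < x i} = j - 1"
proof -
  have "card {l\<in>T. x l < x i} < j"
  proof (cases "{l\<in>T. x l < x i} = {}")
    case False
    define z where "z = Max (x ` {l\<in>T. x l < x i})"
    have z: "z \<in> x ` {l\<in>T. x l < x i}" unfolding z_def using False assms(1) by (intro Max_in) auto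
    have "card {l\<in>T. x l < x i} \<le> card {l\<in>T. x l \<le> z}"
      unfolding z_def using assms(1) by (intro card_mono) auto
    moreover have "card {l\<in>T. x l \<le> z} < j"
      using less_os_iff[OF assms(1-3), of z x] assms(6) z by auto
    ultimately show ?thesis by linarith
  next
    case True
    then show ?thesis using assms(2) by (metis card.empty less_le_trans zero_less_one)
  qed
  moreover have "{l\<in>T. x l \<le> x i} = insert i {l\<in>T. x l < x i}"
    using assms(4,5) by (auto simp: inj_on_def order_le_less)
  then have "j \<le> card {l\<in>T. x l < x i} + 1"
    using less_os_iff[OF assms(1-3), of "x i" x] assms(1,6) by simp
  ultimately show ?thesis by linarith
qed

lemma os_cong:
  assumes "\<And>i. i \<in> T \<Longrightarrow> x i = y i"
  shows "os j T x = os j T y"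
proof -
  have "map x (sorted_list_of_set T) = map y (sorted_list_of_set T)"
    using assms by (cases "finite T") auto
  then show ?thesis unfolding os_def by (simp only:)
qed

lemma os_reindex:
  assumes "finite T" "inj_on \<pi> T" "1 \<le> j" "j \<le> card T" "\<And>i. i \<in> T \<Longrightarrow> y i = x (\<pi> i)"
  shows "os j T y = os j (\<pi> ` T) x"
proof (rule os_eqI[OF assms(1,3,4)])
  fix z
  have "card {i\<in>T. y i \<le> z} = card (\<pi> ` {i\<in>T. x (\<pi> i) \<le> z})"
    using assms(2,5) by (subst card_image) (auto intro: inj_on_subset intro!: arg_cong[where f=card])
  also have "\<pi> ` {i\<in>T. x (\<pi> i) \<le> z} = {l\<in>\<pi> ` T. x l \<le> z}" by blast
  finally have card_eq: "card {i\<in>T. y i \<le> z} = card {l\<in>\<pi> ` T. x l \<le> z}" .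
  have "z < os j (\<pi> ` T) x \<longleftrightarrow> card {l\<in>\<pi> ` T. x l \<le> z} < j"
    by (rule less_os_iff) (use assms(1,3,4) card_image[OF assms(2)] in auto)
  then show "z < os j (\<pi> ` T) x \<longleftrightarrow> card {i\<in>T. y i \<le> z} < j"
    by (simp only: card_eq)
qed

lemma ex_permutes_image_eq:
  assumes "finite A" "S \<subseteq> A" "T \<subseteq> A" "card S = card T"
  shows "\<exists>\<pi>. \<pi> permutes A \<and> \<pi> ` S = T"
proof -
  have fin: "finite S" "finite T" "finite (A - S)" "finite (A - T)"
    using assms(1-3) finite_subset by auto
  obtain f where f: "bij_betw f S T" using finite_same_card_bij[OF fin(1,2) assms(4)] by blast
  have "card (A - S) = card (A - T)"
    using assms fin by (simp add: card_Diff_subset)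
  then obtain g where g: "bij_betw g (A - S) (A - T)" using finite_same_card_bij[OF fin(3,4)] by blast
  define \<pi> where "\<pi> x = (if x \<in> S then f x else if x \<in> A then g x else x)" for x
  have "bij_betw \<pi> S T" using f by (rule bij_betw_cong[THEN iffD1, rotated]) (simp add: \<pi>_def)
  moreover have "bij_betw \<pi> (A - S) (A - T)" using g by (rule bij_betw_cong[THEN iffD1, rotated]) (simp add: \<pi>_def)
  ultimately have "bij_betw \<pi> (S \<union> (A - S)) (T \<union> (A - T))" by (rule bij_betw_combine) blast
  then have "bij_betw \<pi> A A" using assms(2,3) by (simp add: Un_absorb1 Un_Diff_cancel)
  moreover have "\<pi> x = x" if "x \<notin> A" for x using that assms(2) by (auto simp: \<pi>_def)
  ultimately have "\<pi> permutes A" by (rule bij_imp_permutes)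
  moreover have "\<pi> ` S = T" using \<open>bij_betw \<pi> S T\<close> by (simp add: bij_betw_def)
  ultimately show ?thesis by blast
qed

section \<open>Summing an order statistic over all subsets of a given size\<close>

lemma card_subsets_with_pivot:
  assumes "finite Lo" "finite Hi" "Lo \<inter> Hi = {}" "e \<notin> Lo" "e \<notin> Hi" "1 \<le> j" "j \<le> s"
  shows "card {T. T \<subseteq> insert e (Lo \<union> Hi) \<and> card T = s \<and> e \<in> T \<and> card (T \<inter> Lo) = j - 1}
         = (card Lo choose (j - 1)) * (card Hi choose (s - j))"
proof -
  let ?A = "{A. A \<subseteq> Lo \<and> card A = j - 1}" and ?B = "{B. B \<subseteq> Hi \<and> card B = s - j}"
  let ?f = "\<lambda>(A, B). insert e (A \<union> B)"
  have card_insert_Un: "card (insert e (A \<union> B)) = Suc (card A + card B)" if "A \<subseteq> Lo" "B \<subseteq> Hi" for A B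
  proof -
    have "finite A" "finite B" "A \<inter> B = {}" using that assms(1-3) finite_subset by auto
    moreover have "e \<notin> A \<union> B" using that assms(4,5) by blast
    ultimately show ?thesis by (simp add: card_insert_disjoint card_Un_disjoint)
  qed
  have eq: "{T. T \<subseteq> insert e (Lo \<union> Hi) \<and> card T = s \<and> e \<in> T \<and> card (T \<inter> Lo) = j - 1} = ?f ` (?A \<times> ?B)"
  proof (intro set_eqI iffI)
    fix T assume "T \<in> {T. T \<subseteq> insert e (Lo \<union> Hi) \<and> card T = s \<and> e \<in> T \<and> card (T \<inter> Lo) = j - 1}"
    then have T: "T \<subseteq> insert e (Lo \<union> Hi)" "card T = s" "e \<in> T" "card (T \<inter> Lo) = j - 1" by auto
    have T_eq: "T = insert e ((T \<inter> Lo) \<union> (T \<inter> Hi))" using T(1,3) by auto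
    then have "card (T \<inter> Hi) = s - j" using card_insert_Un[of "T \<inter> Lo" "T \<inter> Hi"] T(2,4) assms(6,7) by simp
    then show "T \<in> ?f ` (?A \<times> ?B)" using T(4) T_eq by (auto intro!: image_eqI[where x="(T \<inter> Lo, T \<inter> Hi)"])
  next
    fix T assume "T \<in> ?f ` (?A \<times> ?B)"
    then obtain A B where AB: "A \<subseteq> Lo" "card A = j - 1" "B \<subseteq> Hi" "card B = s - j"
      and T: "T = insert e (A \<union> B)" by auto
    have "T \<inter> Lo = A" using T AB assms(3,4) by auto
    then show "T \<in> {T. T \<subseteq> insert e (Lo \<union> Hi) \<and> card T = s \<and> e \<in> T \<and> card (T \<inter> Lo) = j - 1}"
      using T AB card_insert_Un[OF AB(1,3)] assms(6,7) by auto
  qed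
  have "inj_on ?f (?A \<times> ?B)"
  proof (rule inj_onI, clarify)
    fix A B A' B'
    assume AB: "A \<subseteq> Lo" "B \<subseteq> Hi" "A' \<subseteq> Lo" "B' \<subseteq> Hi"
      and eq: "insert e (A \<union> B) = insert e (A' \<union> B')"
    have "A = insert e (A \<union> B) \<inter> Lo" "B = insert e (A \<union> B) \<inter> Hi"
      "A' = insert e (A' \<union> B') \<inter> Lo" "B' = insert e (A' \<union> B') \<inter> Hi"
      using AB assms(3-5) by auto
    then show "A = A' \<and> B = B'" using eq by metis
  qed
  then show ?thesis unfolding eq
    by (subst card_image) (simp_all add: card_cartesian_product n_subsets assms(1,2))
qed

text \<open>The identity outside \<open>{1..m}\<close>, so that for \<open>x\<close> injective on \<open>{1..m}\<close> it is a permutation.\<close>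
definition coord_rank :: "nat \<Rightarrow> (nat \<Rightarrow> real) \<Rightarrow> nat \<Rightarrow> nat" where
  "coord_rank m x i = (if i \<in> {1..m} then card {l\<in>{1..m}. x l \<le> x i} else i)"

lemma coord_rank_less_iff:
  assumes "i \<in> {1..m}" "l \<in> {1..m}"
  shows "coord_rank m x i < coord_rank m x l \<longleftrightarrow> x i < x l"
proof
  assume "x i < x l"
  then have "{l'\<in>{1..m}. x l' \<le> x i} \<subseteq> {l'\<in>{1..m}. x l' \<le> x l}"
    and "l \<in> {l'\<in>{1..m}. x l' \<le> x l} - {l'\<in>{1..m}. x l' \<le> x i}" using assms by auto
  then have "{l'\<in>{1..m}. x l' \<le> x i} \<subset> {l'\<in>{1..m}. x l' \<le> x l}" by blast
  then show "coord_rank m x i < coord_rank m x l" using assms unfolding coord_rank_def by (simp add: psubset_card_mono)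
next
  assume "coord_rank m x i < coord_rank m x l"
  moreover have "coord_rank m x l \<le> coord_rank m x i" if "x l \<le> x i"
    using assms that unfolding coord_rank_def by (auto intro!: card_mono)
  ultimately show "x i < x l" by linarith
qed

lemma coord_rank_in_range:
  assumes "i \<in> {1..m}"
  shows "coord_rank m x i \<in> {1..m}"
proof -
  have "card {l\<in>{1..m}. x l \<le> x i} \<le> card {1..m}" by (intro card_mono) auto
  moreover have "i \<in> {l\<in>{1..m}. x l \<le> x i}" using assms by simp
  then have "card {l\<in>{1..m}. x l \<le> x i} > 0" by (intro card_gt_0_iff[THEN iffD2]) auto
  ultimately show ?thesis using assms unfolding coord_rank_def by simp
qed

lemma coord_rank_permutes:
  assumes "inj_on x {1..m}"
  shows "coord_rank m x permutes {1..m}"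
proof (rule bij_imp_permutes)
  have "inj_on (coord_rank m x) {1..m}"
  proof (rule inj_onI)
    fix i l assume il: "i \<in> {1..m}" "l \<in> {1..m}" "coord_rank m x i = coord_rank m x l"
    then have "\<not> x i < x l" "\<not> x l < x i"
      using coord_rank_less_iff[OF il(1,2), where x=x] coord_rank_less_iff[OF il(2,1), where x=x] by auto
    then have "x i = x l" by linarith
    then show "i = l" using inj_onD[OF assms _ il(1,2)] by blast
  qed
  moreover have "coord_rank m x ` {1..m} \<subseteq> {1..m}" using coord_rank_in_range by blast
  ultimately show "bij_betw (coord_rank m x) {1..m} {1..m}"
    by (simp add: bij_betw_def endo_inj_surj)
qed (auto simp: coord_rank_def)

lemma card_less_coord_eq_coord_rank:
  assumes "inj_on x {1..m}" "i \<in> {1..m}"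
  shows "card {l\<in>{1..m}. x l < x i} = coord_rank m x i - 1"
proof -
  have "x l \<le> x i \<longleftrightarrow> x l < x i \<or> l = i" if "l \<in> {1..m}" for l
    using inj_onD[OF assms(1) _ that assms(2)] by fastforce
  then have "{l\<in>{1..m}. x l \<le> x i} = insert i {l\<in>{1..m}. x l < x i}"
    using assms(2) by auto
  then show ?thesis using assms(2) unfolding coord_rank_def by simp
qed

lemma card_greater_coord_eq_coord_rank:
  assumes "i \<in> {1..m}"
  shows "card {l\<in>{1..m}. x i < x l} = m - coord_rank m x i"
proof -
  have "{l\<in>{1..m}. x i < x l} = {1..m} - {l\<in>{1..m}. x l \<le> x i}" by auto
  moreover have "card ({1..m} - {l\<in>{1..m}. x l \<le> x i}) = m - card {l\<in>{1..m}. x l \<le> x i}"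
    by (subst card_Diff_subset) auto
  ultimately show ?thesis using assms unfolding coord_rank_def by simp
qed

lemma os_coord_rank:
  assumes "inj_on x {1..m}" "i \<in> {1..m}"
  shows "os (coord_rank m x i) {1..m} x = x i"
  using coord_rank_in_range[OF assms(2)] assms
  by (intro os_eq_coord card_less_coord_eq_coord_rank) auto

lemma card_subsets_os_eq:
  assumes inj: "inj_on x {1..n}" and e: "e \<in> {1..n}" and j: "1 \<le> j" "j \<le> s"
  shows "card {T. T \<subseteq> {1..n} \<and> card T = s \<and> os j T x = x e}
       = ((coord_rank n x e - 1) choose (j - 1)) * ((n - coord_rank n x e) choose (s - j))"
proof -
  define Lo where "Lo = {l\<in>{1..n}. x l < x e}"
  define Hi where "Hi = {l\<in>{1..n}. x e < x l}"
  have "l \<in> insert e (Lo \<union> Hi)" if l: "l \<in> {1..n}" for l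
  proof (cases "l = e")
    case False
    then have "x l < x e \<or> x e < x l" using inj_onD[OF inj _ l e] by fastforce
    then show ?thesis using l unfolding Lo_def Hi_def by blast
  qed simp
  moreover have "insert e (Lo \<union> Hi) \<subseteq> {1..n}" using e by (auto simp: Lo_def Hi_def)
  ultimately have split: "{1..n} = insert e (Lo \<union> Hi)" by blast
  have "{T. T \<subseteq> {1..n} \<and> card T = s \<and> os j T x = x e}
      = {T. T \<subseteq> insert e (Lo \<union> Hi) \<and> card T = s \<and> e \<in> T \<and> card (T \<inter> Lo) = j - 1}"
  proof (intro Collect_cong iffI; elim conjE)
    fix T assume T: "T \<subseteq> {1..n}" "card T = s" "os j T x = x e"
    have fin: "finite T" using T(1) finite_subset by blast
    obtain i where i: "i \<in> T" "os j T x = x i" using os_in_image[OF fin j(1)] T(2) j(2) by auto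
    have "i = e" using inj_onD[OF inj _ _ e] T(1,3) i by auto
    have "T \<inter> Lo = {l\<in>T. x l < x i}" using T(1) \<open>i = e\<close> by (auto simp: Lo_def)
    also have "card \<dots> = j - 1"
      using T(1,2) j i fin inj_on_subset[OF inj T(1)] by (intro card_less_os) auto
    finally show "T \<subseteq> insert e (Lo \<union> Hi) \<and> card T = s \<and> e \<in> T \<and> card (T \<inter> Lo) = j - 1"
      using T(1,2) i(1) \<open>i = e\<close> split by auto
  next
    fix T assume T: "T \<subseteq> insert e (Lo \<union> Hi)" "card T = s" "e \<in> T" "card (T \<inter> Lo) = j - 1"
    have fin: "finite T" using T(1) split by (metis finite_atLeastAtMost finite_subset)
    have "T \<inter> Lo = {l\<in>T. x l < x e}" using T(1) split by (auto simp: Lo_def)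
    then have "os j T x = x e" using T j fin by (intro os_eq_coord) auto
    then show "T \<subseteq> {1..n} \<and> card T = s \<and> os j T x = x e" using T(1,2) split by auto
  qed
  also have "card \<dots> = (card Lo choose (j - 1)) * (card Hi choose (s - j))"
    by (rule card_subsets_with_pivot) (use j in \<open>auto simp: Lo_def Hi_def\<close>)
  finally show ?thesis
    unfolding Lo_def Hi_def card_less_coord_eq_coord_rank[OF inj e] card_greater_coord_eq_coord_rank[OF e] .
qed

lemma sum_os_subsets:
  assumes inj: "inj_on x {1..n}" and j: "1 \<le> j" "j \<le> s"
  shows "(\<Sum>T | T \<subseteq> {1..n} \<and> card T = s. os j T x)
       = (\<Sum>a=1..n. real (((a - 1) choose (j - 1)) * ((n - a) choose (s - j))) * os a {1..n} x)"
proof -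
  let ?P = "{T. T \<subseteq> {1..n} \<and> card T = s}"
  have finP: "finite ?P" by (rule finite_subset[of _ "Pow {1..n}"]) auto
  have os_eq_sum: "os j T x = (\<Sum>e\<in>{1..n}. if os j T x = x e then x e else 0)" if T: "T \<in> ?P" for T
  proof -
    have "finite T" using T finite_subset by auto
    then obtain i where i: "i \<in> T" "os j T x = x i" using os_in_image[of T j x] T j by auto
    then have "{e\<in>{1..n}. os j T x = x e} = {i}" using T inj_onD[OF inj] by auto
    then show ?thesis by (simp add: sum.inter_filter[symmetric] i(2))
  qed
  have "(\<Sum>T\<in>?P. os j T x) = (\<Sum>T\<in>?P. \<Sum>e\<in>{1..n}. if os j T x = x e then x e else 0)"
    using os_eq_sum by (rule sum.cong[OF refl])
  also have "\<dots> = (\<Sum>e\<in>{1..n}. \<Sum>T\<in>?P. if os j T x = x e then x e else 0)"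
    by (rule sum.swap)
  also have "\<dots> = (\<Sum>e\<in>{1..n}. real (card {T. T \<subseteq> {1..n} \<and> card T = s \<and> os j T x = x e}) * x e)"
    by (intro sum.cong refl) (simp add: sum.inter_filter[symmetric] finP conj_assoc)
  also have "\<dots> = (\<Sum>e\<in>{1..n}. real (((coord_rank n x e - 1) choose (j - 1)) * ((n - coord_rank n x e) choose (s - j)))
                      * os (coord_rank n x e) {1..n} x)"
  proof (rule sum.cong[OF refl])
    fix e assume e: "e \<in> {1..n}"
    show "real (card {T. T \<subseteq> {1..n} \<and> card T = s \<and> os j T x = x e}) * x e
        = real (((coord_rank n x e - 1) choose (j - 1)) * ((n - coord_rank n x e) choose (s - j)))
          * os (coord_rank n x e) {1..n} x"
      by (simp only: card_subsets_os_eq[OF inj e j] os_coord_rank[OF inj e])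
  qed
  also have "\<dots> = (\<Sum>a=1..n. real (((a - 1) choose (j - 1)) * ((n - a) choose (s - j))) * os a {1..n} x)"
    by (rule sum.reindex_bij_betw[OF permutes_imp_bij[OF coord_rank_permutes[OF inj]]])
  finally show ?thesis .
qed

abbreviation unit_lborel :: "real measure" where
  "unit_lborel \<equiv> restrict_space lborel {0..1}"

lemma prob_space_unit_lborel: "prob_space unit_lborel"
  by (rule prob_spaceI) (simp add: emeasure_restrict_space space_restrict_space)

lemma prob_space_cube: "prob_space (cube n)"
  unfolding cube_def by (rule prob_space_PiM) (rule prob_space_unit_lborel)

interpretation unit_product: product_sigma_finite "\<lambda>_::nat. unit_lborel"
  by (intro product_sigma_finite.intro prob_space_imp_sigma_finite prob_space_unit_lborel)

lemma space_cube: "space (cube n) = PiE {1..n} (\<lambda>_. {0..1})"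
  unfolding cube_def by (simp add: space_PiM space_restrict_space)

lemma coord_measurable [measurable]: "(\<lambda>x. x i) \<in> borel_measurable (cube n)"
proof (cases "i \<in> {1..n}")
  case True
  have "(\<lambda>x. x i) \<in> cube n \<rightarrow>\<^sub>M unit_lborel"
    unfolding cube_def by (rule measurable_component_singleton[OF True])
  moreover have "(\<lambda>y. y) \<in> borel_measurable unit_lborel" by (rule measurable_restrict_space1) simp
  ultimately show ?thesis by (rule measurable_comp[where g="\<lambda>y. y", unfolded comp_def])
next
  case False
  then have "x i = undefined" if "x \<in> space (cube n)" for x
    using that by (auto simp: space_cube PiE_def extensional_def)
  then show ?thesis by (subst measurable_cong[where g="\<lambda>_. undefined"]) auto
qed

lemma pred_coord_le [measurable]: "Measurable.pred (cube n) (\<lambda>x. x i \<le> x l)"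
  unfolding pred_def by (rule borel_measurable_le) measurable

lemma os_measurable:
  assumes "finite T" "1 \<le> j" "j \<le> card T"
  shows "os j T \<in> borel_measurable (cube n)"
proof (subst borel_measurable_iff_le, intro allI)
  fix c :: real
  have "{x \<in> space (cube n). os j T x \<le> c} = {x \<in> space (cube n). \<not> card {i\<in>T. x i \<le> c} < j}"
    using less_os_iff[OF assms] by (auto simp: not_less[symmetric])
  also have "\<dots> \<in> sets (cube n)" by measurable
  finally show "{x \<in> space (cube n). os j T x \<le> c} \<in> sets (cube n)" .
qed

lemma os_bounds:
  assumes "x \<in> space (cube n)" "T \<subseteq> {1..n}" "1 \<le> j" "j \<le> card T"
  shows "0 \<le> os j T x" "os j T x \<le> 1"
proof -
  have "finite T" using assms(2) finite_subset by blast
  then have "os j T x \<in> x ` T" using assms(3,4) by (rule os_in_image)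
  then show "0 \<le> os j T x" "os j T x \<le> 1" using assms(1,2) by (auto simp: space_cube PiE_iff)
qed

lemma ostat_measurable:
  assumes "b \<le> n + 1"
  shows "(\<lambda>x. ostat n x b) \<in> borel_measurable (cube m)"
proof (cases "b = 0 \<or> b = n + 1")
  case False
  then show ?thesis using os_measurable[of "{1..n}" b] assms unfolding ostat_def by simp
qed (auto simp: ostat_def)

lemma ostat_bounds:
  assumes "x \<in> space (cube m)" "n \<le> m" "b \<le> n + 1"
  shows "0 \<le> ostat n x b" "ostat n x b \<le> 1"
  using os_bounds[OF assms(1), of "{1..n}" b] assms(2,3) unfolding ostat_def by auto

lemma ostat_cong:
  assumes "\<And>i. i \<in> {1..n} \<Longrightarrow> x i = y i"
  shows "ostat n x b = ostat n y b"
  unfolding ostat_def using os_cong[of "{1..n}" x y b] assms by simp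

lemma permute_coords_measurable:
  assumes "\<pi> permutes {1..n}"
  shows "(\<lambda>x. \<lambda>i\<in>{1..n}. x (\<pi> i)) \<in> cube n \<rightarrow>\<^sub>M cube n"
  unfolding cube_def
proof (rule measurable_restrict)
  fix i assume "i \<in> {1..n}"
  then have "\<pi> i \<in> {1..n}" using permutes_in_image[OF assms] by simp
  then show "(\<lambda>x. x (\<pi> i)) \<in> Pi\<^sub>M {1..n} (\<lambda>_. unit_lborel) \<rightarrow>\<^sub>M unit_lborel"
    by (rule measurable_component_singleton)
qed

lemma distr_cube_permute_coords:
  assumes "\<pi> permutes {1..n}"
  shows "distr (cube n) (cube n) (\<lambda>x. \<lambda>i\<in>{1..n}. x (\<pi> i)) = cube n"
proof -
  have "\<pi> \<in> {1..n} \<rightarrow> {1..n}" using permutes_in_image[OF assms] by auto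
  then show ?thesis unfolding cube_def
    using distr_PiM_reindex[OF prob_space_unit_lborel permutes_inj_on[OF assms]] by simp
qed

lemma integral_cube_permute_coords:
  fixes f :: "(nat \<Rightarrow> real) \<Rightarrow> real"
  assumes "\<pi> permutes {1..n}" "f \<in> borel_measurable (cube n)"
  shows "(\<integral>x. f x \<partial>cube n) = (\<integral>x. f (\<lambda>i\<in>{1..n}. x (\<pi> i)) \<partial>cube n)"
  using integral_distr[OF permute_coords_measurable[OF assms(1)] assms(2)]
  unfolding distr_cube_permute_coords[OF assms(1)] .

lemma measure_cube_permute_coords:
  assumes "\<pi> permutes {1..n}" "A \<in> sets (cube n)"
  shows "measure (cube n) A = measure (cube n) ((\<lambda>x. \<lambda>i\<in>{1..n}. x (\<pi> i)) -` A \<inter> space (cube n))"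
  using measure_distr[OF permute_coords_measurable[OF assms(1)] assms(2)]
  unfolding distr_cube_permute_coords[OF assms(1)] .

lemma ostat_permute_coords:
  assumes "\<pi> permutes {1..n}" "b \<le> n + 1"
  shows "ostat n (\<lambda>i\<in>{1..n}. x (\<pi> i)) b = ostat n x b"
proof (cases "b = 0 \<or> b = n + 1")
  case False
  then have "os b {1..n} (\<lambda>i\<in>{1..n}. x (\<pi> i)) = os b (\<pi> ` {1..n}) x"
    using assms(2) by (intro os_reindex permutes_inj_on[OF assms(1)]) auto
  then show ?thesis using False unfolding permutes_image[OF assms(1)] by (simp add: ostat_def)
qed (auto simp: ostat_def)

section \<open>Cells of the coordinate orderings\<close>

lemma cube_coord_eq_null:
  assumes i: "i \<in> {1..n}" and l: "l \<in> {1..n}" and "i \<noteq> l"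
  shows "{x\<in>space (cube n). x i = x l} \<in> null_sets (cube n)"
proof -
  let ?A = "{x\<in>space (cube n). x i = x l}" and ?I = "{1..n} - {i}"
  have A: "?A \<in> sets (cube n)" by measurable
  have cube_eq: "cube n = PiM (insert i ?I) (\<lambda>_. unit_lborel)" unfolding cube_def using i by (simp add: insert_absorb)
  have "emeasure (cube n) ?A = (\<integral>\<^sup>+ x. indicator ?A x \<partial>cube n)"
    using A by simp
  also have "\<dots> = (\<integral>\<^sup>+ x. (\<integral>\<^sup>+ y. indicator ?A (x(i := y)) \<partial>unit_lborel) \<partial>PiM ?I (\<lambda>_. unit_lborel))"
    using borel_measurable_indicator[OF A] unfolding cube_eq
    by (intro unit_product.product_nn_integral_insert) auto
  also have "\<dots> = (\<integral>\<^sup>+ x. 0 \<partial>PiM ?I (\<lambda>_. unit_lborel))"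
  proof (rule nn_integral_cong)
    fix x
    have "(\<integral>\<^sup>+ y. indicator ?A (x(i := y)) \<partial>unit_lborel) \<le> (\<integral>\<^sup>+ y. indicator {x l} y \<partial>unit_lborel)"
      using \<open>i \<noteq> l\<close> by (intro nn_integral_mono) (auto simp: indicator_def)
    also have "\<dots> = (\<integral>\<^sup>+ y. indicator {x l} y * indicator {0..1} y \<partial>lborel)"
      by (rule nn_integral_restrict_space) simp
    also have "\<dots> \<le> (\<integral>\<^sup>+ y. indicator {x l} y \<partial>lborel)"
      by (intro nn_integral_mono) (auto simp: indicator_def)
    finally show "(\<integral>\<^sup>+ y. indicator ?A (x(i := y)) \<partial>unit_lborel) = 0" by simp
  qed
  finally show ?thesis using A by (simp add: null_sets_def)
qed

lemma AE_cube_inj_on: "AE x in cube n. inj_on x {1..n}"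
proof -
  have "AE x in cube n. \<forall>i\<in>{1..n}. \<forall>l\<in>{1..n}. i \<noteq> l \<longrightarrow> x i \<noteq> x l"
  proof (intro AE_finite_allI finite_atLeastAtMost)
    fix i l assume "i \<in> {1..n}" "l \<in> {1..n}"
    then show "AE x in cube n. i \<noteq> l \<longrightarrow> x i \<noteq> x l"
      by (cases "i = l") (auto intro: AE_I'[OF cube_coord_eq_null])
  qed
  then show ?thesis by eventually_elim (auto simp: inj_on_def)
qed

text \<open>For the permutations \<open>\<sigma>\<close> of \<open>{1..n}\<close> these cells partition the cube up to a null set.\<close>
definition order_cell :: "nat \<Rightarrow> (nat \<Rightarrow> nat) \<Rightarrow> (nat \<Rightarrow> real) set" where
  "order_cell n \<sigma> = {x\<in>space (cube n). \<forall>i\<in>{1..n}. \<forall>l\<in>{1..n}. \<sigma> i < \<sigma> l \<longrightarrow> x i < x l}"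

lemma order_cell_sets [measurable]: "order_cell n \<sigma> \<in> sets (cube n)"
  unfolding order_cell_def by measurable

lemma coord_le_iff_in_order_cell:
  assumes "\<sigma> permutes {1..n}" "x \<in> order_cell n \<sigma>" "i \<in> {1..n}" "l \<in> {1..n}"
  shows "x l \<le> x i \<longleftrightarrow> \<sigma> l \<le> \<sigma> i"
proof (cases "i = l")
  case False
  then have "\<sigma> i \<noteq> \<sigma> l" using permutes_inj_on[OF assms(1)] assms(3,4) by (metis inj_onD)
  then consider "\<sigma> i < \<sigma> l" | "\<sigma> l < \<sigma> i" by linarith
  then show ?thesis using assms(2-4) unfolding order_cell_def by cases force+
qed simp

lemma card_le_permutes:
  assumes "\<sigma> permutes {1..n}" "i \<in> {1..n}"
  shows "card {l\<in>{1..n}. \<sigma> l \<le> \<sigma> i} = \<sigma> i"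
proof -
  have "\<sigma> ` {l\<in>{1..n}. \<sigma> l \<le> \<sigma> i} = {v\<in>\<sigma> ` {1..n}. v \<le> \<sigma> i}" by blast
  also have "\<dots> = {1..\<sigma> i}"
    using permutes_image[OF assms(1)] permutes_in_image[OF assms(1), of i] assms(2) by auto
  finally have "card (\<sigma> ` {l\<in>{1..n}. \<sigma> l \<le> \<sigma> i}) = \<sigma> i" by simp
  then show ?thesis
    using permutes_inj_on[OF assms(1)] by (subst (asm) card_image) (auto intro: inj_on_subset)
qed

lemma coord_rank_eq_if_in_order_cell:
  assumes "\<sigma> permutes {1..n}" "x \<in> order_cell n \<sigma>"
  shows "coord_rank n x = \<sigma>"
proof
  fix i
  show "coord_rank n x i = \<sigma> i"
  proof (cases "i \<in> {1..n}")
    case True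
    then have "{l\<in>{1..n}. x l \<le> x i} = {l\<in>{1..n}. \<sigma> l \<le> \<sigma> i}"
      using coord_le_iff_in_order_cell[OF assms] by auto
    then show ?thesis using True card_le_permutes[OF assms(1) True] by (simp add: coord_rank_def)
  next
    case False
    then show ?thesis
      unfolding coord_rank_def if_not_P[OF False] using permutes_not_in[OF assms(1) False] by simp
  qed
qed

lemma in_order_cell_coord_rank:
  assumes "x \<in> space (cube n)" "inj_on x {1..n}"
  shows "x \<in> order_cell n (coord_rank n x)"
  unfolding order_cell_def using assms(1) coord_rank_less_iff by auto

lemma measure_eq_sum_order_cells:
  assumes A: "A \<in> sets (cube n)"
    and cells: "\<And>\<sigma> x. \<sigma> permutes {1..n} \<Longrightarrow> x \<in> order_cell n \<sigma> \<Longrightarrow> x \<in> A \<longleftrightarrow> \<Phi> \<sigma>"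
  shows "measure (cube n) A = (\<Sum>\<sigma> | \<sigma> permutes {1..n} \<and> \<Phi> \<sigma>. measure (cube n) (order_cell n \<sigma>))"
proof -
  interpret prob_space "cube n" by (rule prob_space_cube)
  let ?S = "{\<sigma>. \<sigma> permutes {1..n} \<and> \<Phi> \<sigma>}"
  have fin: "finite ?S"
    by (rule finite_subset[of _ "{\<sigma>. \<sigma> permutes {1..n}}"]) (auto simp: finite_permutations)
  have ae: "AE x in cube n. x \<in> A \<longleftrightarrow> x \<in> (\<Union>\<sigma>\<in>?S. order_cell n \<sigma>)"
    using AE_cube_inj_on
  proof (rule AE_mp, intro AE_I2 impI)
    fix x assume "x \<in> space (cube n)" "inj_on x {1..n}"
    then have perm: "coord_rank n x permutes {1..n}" and cell: "x \<in> order_cell n (coord_rank n x)"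
      using coord_rank_permutes in_order_cell_coord_rank by auto
    have "x \<in> (\<Union>\<sigma>\<in>?S. order_cell n \<sigma>) \<longleftrightarrow> \<Phi> (coord_rank n x)"
    proof
      assume "x \<in> (\<Union>\<sigma>\<in>?S. order_cell n \<sigma>)"
      then obtain \<sigma> where "\<sigma> permutes {1..n}" "\<Phi> \<sigma>" "x \<in> order_cell n \<sigma>" by blast
      then show "\<Phi> (coord_rank n x)" by (simp add: coord_rank_eq_if_in_order_cell)
    qed (use perm cell in blast)
    then show "x \<in> A \<longleftrightarrow> x \<in> (\<Union>\<sigma>\<in>?S. order_cell n \<sigma>)" using cells[OF perm cell] by simp
  qed
  have "(\<Union>\<sigma>\<in>?S. order_cell n \<sigma>) \<in> sets (cube n)"
    using fin by (intro sets.finite_UN) auto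
  then have "measure (cube n) A = measure (cube n) (\<Union>\<sigma>\<in>?S. order_cell n \<sigma>)"
    by (rule measure_eq_AE[OF ae A])
  also have "\<dots> = (\<Sum>\<sigma>\<in>?S. measure (cube n) (order_cell n \<sigma>))"
  proof (rule finite_measure_finite_Union[OF fin])
    show "disjoint_family_on (order_cell n) ?S"
      unfolding disjoint_family_on_def
    proof (intro ballI impI)
      fix \<sigma> \<tau> assume "\<sigma> \<in> ?S" "\<tau> \<in> ?S" "\<sigma> \<noteq> \<tau>"
      then show "order_cell n \<sigma> \<inter> order_cell n \<tau> = {}"
        using coord_rank_eq_if_in_order_cell[of \<sigma> n] coord_rank_eq_if_in_order_cell[of \<tau> n] by auto
    qed
  qed auto
  finally show ?thesis .
qed

lemma order_cell_permute_coords: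
  assumes "\<sigma> permutes {1..n}"
  shows "(\<lambda>x. \<lambda>i\<in>{1..n}. x (\<sigma> i)) -` order_cell n \<sigma> \<inter> space (cube n) = order_cell n id"
proof -
  have "(\<lambda>i\<in>{1..n}. x (\<sigma> i)) \<in> order_cell n \<sigma> \<longleftrightarrow> x \<in> order_cell n id" if x: "x \<in> space (cube n)" for x
  proof -
    have "(\<lambda>i\<in>{1..n}. x (\<sigma> i)) \<in> space (cube n)"
      using measurable_space[OF permute_coords_measurable[OF assms] x] .
    then have "(\<lambda>i\<in>{1..n}. x (\<sigma> i)) \<in> order_cell n \<sigma>
        \<longleftrightarrow> (\<forall>i\<in>{1..n}. \<forall>l\<in>{1..n}. \<sigma> i < \<sigma> l \<longrightarrow> x (\<sigma> i) < x (\<sigma> l))"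
      unfolding order_cell_def by simp
    also have "\<dots> \<longleftrightarrow> (\<forall>a\<in>\<sigma> ` {1..n}. \<forall>b\<in>\<sigma> ` {1..n}. a < b \<longrightarrow> x a < x b)" by blast
    also have "\<dots> \<longleftrightarrow> x \<in> order_cell n id"
      using x unfolding order_cell_def permutes_image[OF assms] by simp
    finally show ?thesis .
  qed
  moreover have "order_cell n id \<subseteq> space (cube n)" unfolding order_cell_def by blast
  ultimately show ?thesis by blast
qed

lemma measure_order_cell:
  assumes "\<sigma> permutes {1..n}"
  shows "measure (cube n) (order_cell n \<sigma>) = 1 / fact n"
proof -
  interpret prob_space "cube n" by (rule prob_space_cube)
  have same: "measure (cube n) (order_cell n \<tau>) = measure (cube n) (order_cell n id)"
    if "\<tau> permutes {1..n}" for \<tau>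
    using measure_cube_permute_coords[OF that order_cell_sets[of n \<tau>]]
    unfolding order_cell_permute_coords[OF that] .
  have "1 = measure (cube n) (space (cube n))" by (simp add: prob_space)
  also have "\<dots> = (\<Sum>\<tau> | \<tau> permutes {1..n} \<and> True. measure (cube n) (order_cell n \<tau>))"
    by (rule measure_eq_sum_order_cells) (auto simp only: order_cell_def sets.top mem_Collect_eq)
  also have "\<dots> = (\<Sum>\<tau> | \<tau> permutes {1..n}. measure (cube n) (order_cell n id))"
    by (rule sum.cong) (auto intro!: same)
  also have "\<dots> = real (card {\<tau>. \<tau> permutes {1..n}}) * measure (cube n) (order_cell n id)"
    by (rule sum_constant)
  also have "card {\<tau>. \<tau> permutes {1..n}} = fact n"
    by (rule card_permutations) simp_all
  finally show ?thesis using same[OF assms] by (simp add: field_simps id_def)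
qed

lemma measure_by_order_cells:
  assumes "A \<in> sets (cube n)"
    and "\<And>\<sigma> x. \<sigma> permutes {1..n} \<Longrightarrow> x \<in> order_cell n \<sigma> \<Longrightarrow> x \<in> A \<longleftrightarrow> \<Phi> \<sigma>"
  shows "measure (cube n) A = card {\<sigma>. \<sigma> permutes {1..n} \<and> \<Phi> \<sigma>} / fact n"
proof -
  have "measure (cube n) A = (\<Sum>\<sigma> | \<sigma> permutes {1..n} \<and> \<Phi> \<sigma>. measure (cube n) (order_cell n \<sigma>))"
    by (rule measure_eq_sum_order_cells[OF assms])
  also have "\<dots> = (\<Sum>\<sigma> | \<sigma> permutes {1..n} \<and> \<Phi> \<sigma>. 1 / fact n)"
    by (rule sum.cong) (auto simp: measure_order_cell)
  finally show ?thesis by simp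
qed

section \<open>Products of two order statistics\<close>

lemma nn_integral_cube_Suc:
  fixes f :: "(nat \<Rightarrow> real) \<Rightarrow> ennreal"
  assumes "f \<in> borel_measurable (cube (Suc m))"
  shows "(\<integral>\<^sup>+x. f x \<partial>cube (Suc m)) = (\<integral>\<^sup>+x. (\<integral>\<^sup>+y. f (x(Suc m := y)) \<partial>unit_lborel) \<partial>cube m)"
proof -
  have cube_Suc: "cube (Suc m) = PiM (insert (Suc m) {1..m}) (\<lambda>_. unit_lborel)"
    unfolding cube_def by (simp add: atLeastAtMostSuc_conv)
  show ?thesis
    using assms unfolding cube_Suc unfolding cube_def
    by (intro unit_product.product_nn_integral_insert) auto
qed

lemma sets_count_below:
  fixes x :: "nat \<Rightarrow> real"
  shows "{y\<in>space unit_lborel. card {i\<in>{1..n}. x i \<le> y} < b} \<in> sets unit_lborel"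
proof -
  have "(\<lambda>y. card {i\<in>{1..n}. x i \<le> y}) \<in> borel \<rightarrow>\<^sub>M count_space UNIV" by measurable
  then have "Measurable.pred borel (\<lambda>y. card {i\<in>{1..n}. x i \<le> y} < b)" by (rule pred_less_const) simp
  then have "{0..1} \<inter> {y. card {i\<in>{1..n}. x i \<le> y} < b} \<in> sets borel" by (simp add: pred_def)
  then show ?thesis by (subst sets_restrict_space_iff) (auto simp: space_restrict_space Int_def)
qed

lemma emeasure_count_below_eq_ostat:
  assumes "\<And>i. i \<in> {1..n} \<Longrightarrow> x i \<in> {0..1}" "b \<le> n + 1"
  shows "emeasure unit_lborel {y\<in>{0..1}. card {i\<in>{1..n}. x i \<le> y} < b} = ennreal (ostat n x b)"
proof -
  consider "b = 0" | "b = n + 1" | "1 \<le> b" "b \<le> n" using assms(2) by linarith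
  then show ?thesis
  proof cases
    case 1
    then show ?thesis by (simp add: ostat_def)
  next
    case 2
    have "card {i\<in>{1..n}. x i \<le> y} \<le> card {1..n}" for y by (intro card_mono) auto
    then have "card {i\<in>{1..n}. x i \<le> y} < b" for y using 2 by (simp add: less_Suc_eq_le)
    then have "{y\<in>{0..1}. card {i\<in>{1..n}. x i \<le> y} < b} = {0..1}" by blast
    then show ?thesis using 2 by (subst emeasure_restrict_space) (auto simp: ostat_def)
  next
    case 3
    define v where "v = os b {1..n} x"
    have "v \<in> x ` {1..n}" unfolding v_def by (rule os_in_image) (use 3 in auto)
    then have v: "0 \<le> v" "v \<le> 1" using assms(1) by auto
    have less_v: "y < v \<longleftrightarrow> card {i\<in>{1..n}. x i \<le> y} < b" for y
      unfolding v_def by (rule less_os_iff) (use 3 in auto)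
    have "{y\<in>{0..1}. card {i\<in>{1..n}. x i \<le> y} < b} = {0..<v}"
    proof (intro set_eqI)
      fix y show "y \<in> {y\<in>{0..1}. card {i\<in>{1..n}. x i \<le> y} < b} \<longleftrightarrow> y \<in> {0..<v}"
        using less_v[of y] v by auto
    qed
    moreover have "ostat n x b = v" using 3 unfolding v_def ostat_def by simp
    ultimately show ?thesis using v by (subst emeasure_restrict_space) auto
  qed
qed

text \<open>This is where order statistics turn into probabilities: for a uniform \<open>y\<close>, the chance
  that at most \<open>b - 1\<close> of the \<open>x i\<close> lie at or below \<open>y\<close> is \<open>ostat n x b\<close>.\<close>
lemma nn_integral_count_below_last_coord:
  fixes f :: "(nat \<Rightarrow> real) \<Rightarrow> ennreal"
  assumes "n \<le> m" "b \<le> n + 1" "f \<in> borel_measurable (cube (Suc m))"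
    and "\<And>x y. f (x(Suc m := y)) = f x"
  shows "(\<integral>\<^sup>+w. of_bool (card {i\<in>{1..n}. w i \<le> w (Suc m)} < b) * f w \<partial>cube (Suc m))
       = (\<integral>\<^sup>+x. ennreal (ostat n x b) * f x \<partial>cube m)"
proof -
  have [measurable]: "f \<in> borel_measurable (cube (Suc m))" by (rule assms(3))
  have meas: "(\<lambda>w. of_bool (card {i\<in>{1..n}. w i \<le> w (Suc m)} < b) * f w) \<in> borel_measurable (cube (Suc m))"
    by measurable
  have count_upd: "{i\<in>{1..n}. (x(Suc m := y)) i \<le> (x(Suc m := y)) (Suc m)} = {i\<in>{1..n}. x i \<le> y}" for x y
    using assms(1) by auto
  have "(\<integral>\<^sup>+w. of_bool (card {i\<in>{1..n}. w i \<le> w (Suc m)} < b) * f w \<partial>cube (Suc m))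
      = (\<integral>\<^sup>+x. (\<integral>\<^sup>+y. of_bool (card {i\<in>{1..n}. x i \<le> y} < b) * f x \<partial>unit_lborel) \<partial>cube m)"
    unfolding nn_integral_cube_Suc[OF meas] count_upd assms(4) ..
  also have "\<dots> = (\<integral>\<^sup>+x. ennreal (ostat n x b) * f x \<partial>cube m)"
  proof (rule nn_integral_cong)
    fix x assume x: "x \<in> space (cube m)"
    let ?B = "{y\<in>space unit_lborel. card {i\<in>{1..n}. x i \<le> y} < b}"
    have "(\<integral>\<^sup>+y. of_bool (card {i\<in>{1..n}. x i \<le> y} < b) * f x \<partial>unit_lborel)
        = (\<integral>\<^sup>+y. f x * indicator ?B y \<partial>unit_lborel)"
      by (rule nn_integral_cong) (simp add: indicator_def mult.commute)
    also have "\<dots> = f x * emeasure unit_lborel ?B"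
      by (rule nn_integral_cmult_indicator) (rule sets_count_below)
    also have "?B = {y\<in>{0..1}. card {i\<in>{1..n}. x i \<le> y} < b}"
      by (simp add: space_restrict_space)
    also have "emeasure unit_lborel \<dots> = ennreal (ostat n x b)"
      using x assms(1,2) by (intro emeasure_count_below_eq_ostat) (auto simp: space_cube PiE_iff)
    finally show "(\<integral>\<^sup>+y. of_bool (card {i\<in>{1..n}. x i \<le> y} < b) * f x \<partial>unit_lborel)
        = ennreal (ostat n x b) * f x" by (simp add: mult.commute)
  qed
  finally show ?thesis .
qed

lemma integral_ostat_mult_ostat:
  assumes a: "a \<le> n + 1" and b: "b \<le> n + 1"
  shows "(\<integral>x. ostat n x a * ostat n x b \<partial>cube n)
       = measure (cube (Suc (Suc n))) {w\<in>space (cube (Suc (Suc n))).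
           card {i\<in>{1..n}. w i \<le> w (Suc (Suc n))} < a \<and> card {i\<in>{1..n}. w i \<le> w (Suc n)} < b}"
    (is "_ = measure _ ?E")
proof -
  have [measurable]: "(\<lambda>x. ostat n x a) \<in> borel_measurable (cube m)" for m
    using a by (rule ostat_measurable)
  have "?E \<in> sets (cube (Suc (Suc n)))" by measurable
  then have "emeasure (cube (Suc (Suc n))) ?E = (\<integral>\<^sup>+w. indicator ?E w \<partial>cube (Suc (Suc n)))"
    by simp
  also have "\<dots> = (\<integral>\<^sup>+w. of_bool (card {i\<in>{1..n}. w i \<le> w (Suc (Suc n))} < a)
              * of_bool (card {i\<in>{1..n}. w i \<le> w (Suc n)} < b) \<partial>cube (Suc (Suc n)))"
    by (rule nn_integral_cong) (simp add: indicator_def of_bool_conj)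
  also have "\<dots> = (\<integral>\<^sup>+x. ennreal (ostat n x a) * of_bool (card {i\<in>{1..n}. x i \<le> x (Suc n)} < b) \<partial>cube (Suc n))"
  proof (rule nn_integral_count_below_last_coord)
    show "of_bool (card {i\<in>{1..n}. (x(Suc (Suc n) := y)) i \<le> (x(Suc (Suc n) := y)) (Suc n)} < b)
        = (of_bool (card {i\<in>{1..n}. x i \<le> x (Suc n)} < b) :: ennreal)" for x y
      by (intro arg_cong[where f="\<lambda>A. of_bool (card A < b)"] Collect_cong) auto
  qed (use a in simp_all)
  also have "\<dots> = (\<integral>\<^sup>+x. of_bool (card {i\<in>{1..n}. x i \<le> x (Suc n)} < b) * ennreal (ostat n x a) \<partial>cube (Suc n))"
    by (simp add: mult.commute)
  also have "\<dots> = (\<integral>\<^sup>+x. ennreal (ostat n x b) * ennreal (ostat n x a) \<partial>cube n)"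
    using b by (intro nn_integral_count_below_last_coord) (auto intro!: arg_cong[where f=ennreal] ostat_cong)
  also have "\<dots> = (\<integral>\<^sup>+x. ennreal (ostat n x a * ostat n x b) \<partial>cube n)"
    using a b by (intro nn_integral_cong) (simp add: ennreal_mult' ostat_bounds mult.commute)
  finally have "emeasure (cube (Suc (Suc n))) ?E = (\<integral>\<^sup>+x. ennreal (ostat n x a * ostat n x b) \<partial>cube n)" .
  moreover have "(\<integral>x. ostat n x a * ostat n x b \<partial>cube n) = enn2real (\<integral>\<^sup>+x. ennreal (ostat n x a * ostat n x b) \<partial>cube n)"
    using a b ostat_measurable[OF b] by (intro integral_eq_nn_integral AE_I2) (auto simp: ostat_bounds)
  ultimately show ?thesis by (simp add: measure_def)
qed

text \<open>For distinct \<open>u, v \<in> {1..N}\<close>, the number of elements of \<open>{1..N} - {u, v}\<close> below \<open>v\<close>.\<close>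
definition others_below :: "nat \<Rightarrow> nat \<Rightarrow> nat" where
  "others_below u v = v - 1 - of_bool (u < v)"

lemma card_permutes_below:
  assumes perm: "\<sigma> permutes {1..Suc (Suc n)}"
    and kl: "k \<in> {Suc n, Suc (Suc n)}" "l \<in> {Suc n, Suc (Suc n)}" "k \<noteq> l"
  shows "card {i\<in>{1..n}. \<sigma> i \<le> \<sigma> k} = others_below (\<sigma> l) (\<sigma> k)"
proof -
  define A where "A = {i\<in>{1..n}. \<sigma> i \<le> \<sigma> k}"
  have A: "finite A" "k \<notin> A" "l \<notin> A" using kl by (auto simp: A_def)
  have "\<sigma> l \<noteq> \<sigma> k" using permutes_inj[OF perm] kl(3) by (auto dest: injD)
  then have l_le: "\<sigma> l \<le> \<sigma> k \<longleftrightarrow> \<sigma> l < \<sigma> k" by auto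
  have "k \<in> {1..Suc (Suc n)}" using kl by auto
  then have "\<sigma> k = card {i\<in>{1..Suc (Suc n)}. \<sigma> i \<le> \<sigma> k}"
    by (rule card_le_permutes[OF perm, symmetric])
  also have "{i\<in>{1..Suc (Suc n)}. \<sigma> i \<le> \<sigma> k} = insert k (A \<union> (if \<sigma> l < \<sigma> k then {l} else {}))"
    using kl l_le unfolding A_def by (auto simp: le_Suc_eq)
  also have "card \<dots> = Suc (card A + of_bool (\<sigma> l < \<sigma> k))"
    using A kl(3) by (cases "\<sigma> l < \<sigma> k") auto
  finally show ?thesis unfolding others_below_def A_def by simp
qed

lemma card_permutes_with_values:
  assumes u: "u \<in> {1..Suc (Suc n)}" and v: "v \<in> {1..Suc (Suc n)}" and "u \<noteq> v"
  shows "card {\<sigma>. \<sigma> permutes {1..Suc (Suc n)} \<and> \<sigma> (Suc n) = u \<and> \<sigma> (Suc (Suc n)) = v} = fact n"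
proof -
  let ?N = "{1..Suc (Suc n)}"
  define \<rho> where "\<rho> = Transposition.transpose (Suc n) u"
  define w where "w = \<rho> (Suc (Suc n))"
  define \<tau> where "\<tau> = Transposition.transpose w v \<circ> \<rho>"
  have \<rho>: "\<rho> permutes ?N" unfolding \<rho>_def by (rule permutes_swap_id) (use u in auto)
  have w: "w \<in> ?N" unfolding w_def by (rule permutes_in_image[OF \<rho>, THEN iffD2]) simp
  have \<tau>: "\<tau> permutes ?N" unfolding \<tau>_def by (rule permutes_compose[OF \<rho> permutes_swap_id[OF w v]])
  have "\<rho> (Suc n) = u" unfolding \<rho>_def by simp
  moreover have "w \<noteq> u"
    unfolding w_def using \<open>\<rho> (Suc n) = u\<close> inj_eq[OF permutes_inj[OF \<rho>], of "Suc (Suc n)" "Suc n"] by simp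
  ultimately have \<tau>_values: "\<tau> (Suc n) = u" "\<tau> (Suc (Suc n)) = v"
    using \<open>u \<noteq> v\<close> unfolding \<tau>_def w_def by simp_all
  have "{\<sigma>. \<sigma> permutes ?N \<and> \<sigma> (Suc n) = u \<and> \<sigma> (Suc (Suc n)) = v} = (\<lambda>\<pi>. \<tau> \<circ> \<pi>) ` {\<pi>. \<pi> permutes {1..n}}"
  proof (intro equalityI subsetI)
    fix \<sigma> assume "\<sigma> \<in> {\<sigma>. \<sigma> permutes ?N \<and> \<sigma> (Suc n) = u \<and> \<sigma> (Suc (Suc n)) = v}"
    then have \<sigma>: "\<sigma> permutes ?N" "\<sigma> (Suc n) = u" "\<sigma> (Suc (Suc n)) = v" by simp_all
    define \<pi> where "\<pi> = inv \<tau> \<circ> \<sigma>"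
    have "\<pi> (Suc n) = Suc n" "\<pi> (Suc (Suc n)) = Suc (Suc n)"
      unfolding \<pi>_def using \<sigma>(2,3) \<tau>_values permutes_inverses(2)[OF \<tau>, of "Suc n"]
        permutes_inverses(2)[OF \<tau>, of "Suc (Suc n)"] by simp_all
    then have "\<pi> permutes {1..n}"
      using permutes_superset[OF permutes_compose[OF \<sigma>(1) permutes_inv[OF \<tau>]], of "{1..n}"]
      unfolding \<pi>_def by (force simp: le_Suc_eq)
    moreover have "\<sigma> = \<tau> \<circ> \<pi>" unfolding \<pi>_def by (simp add: o_assoc permutes_inv_o(1)[OF \<tau>])
    ultimately show "\<sigma> \<in> (\<lambda>\<pi>. \<tau> \<circ> \<pi>) ` {\<pi>. \<pi> permutes {1..n}}" by blast
  next
    fix \<sigma> assume "\<sigma> \<in> (\<lambda>\<pi>. \<tau> \<circ> \<pi>) ` {\<pi>. \<pi> permutes {1..n}}"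
    then obtain \<pi> where \<pi>: "\<pi> permutes {1..n}" and \<sigma>: "\<sigma> = \<tau> \<circ> \<pi>" by blast
    have "\<pi> permutes ?N" by (rule permutes_subset[OF \<pi>]) auto
    moreover have "\<pi> (Suc n) = Suc n" "\<pi> (Suc (Suc n)) = Suc (Suc n)" using permutes_not_in[OF \<pi>] by simp_all
    ultimately show "\<sigma> \<in> {\<sigma>. \<sigma> permutes ?N \<and> \<sigma> (Suc n) = u \<and> \<sigma> (Suc (Suc n)) = v}"
      using \<sigma> \<tau>_values permutes_compose[OF _ \<tau>] by simp
  qed
  moreover have "inj_on (\<lambda>\<pi>. \<tau> \<circ> \<pi>) {\<pi>. \<pi> permutes {1..n}}"
  proof (rule inj_onI)
    fix \<pi>1 \<pi>2 :: "nat \<Rightarrow> nat" assume "\<tau> \<circ> \<pi>1 = \<tau> \<circ> \<pi>2"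
    then have "inv \<tau> \<circ> \<tau> \<circ> \<pi>1 = inv \<tau> \<circ> \<tau> \<circ> \<pi>2" by (simp add: o_assoc[symmetric])
    then show "\<pi>1 = \<pi>2" by (simp add: permutes_inv_o(2)[OF \<tau>])
  qed
  ultimately show ?thesis by (simp only: card_image) (rule card_permutations, simp_all)
qed

lemma card_permutes_last_two:
  "card {\<sigma>. \<sigma> permutes {1..Suc (Suc n)} \<and> P (\<sigma> (Suc n)) (\<sigma> (Suc (Suc n)))}
     = fact n * card {(u, v). u \<in> {1..Suc (Suc n)} \<and> v \<in> {1..Suc (Suc n)} \<and> u \<noteq> v \<and> P u v}"
  (is "card ?L = _ * card ?Pairs")
proof -
  let ?N = "{1..Suc (Suc n)}"
  let ?fiber = "\<lambda>p. {\<sigma>. \<sigma> permutes ?N \<and> \<sigma> (Suc n) = fst p \<and> \<sigma> (Suc (Suc n)) = snd p}"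
  have "?L = (\<Union>p\<in>?Pairs. ?fiber p)"
  proof (intro equalityI subsetI)
    fix \<sigma> assume "\<sigma> \<in> ?L"
    then have \<sigma>: "\<sigma> permutes ?N" "P (\<sigma> (Suc n)) (\<sigma> (Suc (Suc n)))" by simp_all
    have "\<sigma> (Suc n) \<noteq> \<sigma> (Suc (Suc n))"
      using inj_eq[OF permutes_inj[OF \<sigma>(1)], of "Suc n" "Suc (Suc n)"] by simp
    moreover have "\<sigma> (Suc n) \<in> ?N" "\<sigma> (Suc (Suc n)) \<in> ?N"
      by (rule permutes_in_image[OF \<sigma>(1), THEN iffD2], simp)+
    ultimately have "(\<sigma> (Suc n), \<sigma> (Suc (Suc n))) \<in> ?Pairs" using \<sigma>(2) by simp
    moreover have "\<sigma> \<in> ?fiber (\<sigma> (Suc n), \<sigma> (Suc (Suc n)))" using \<sigma>(1) by simp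
    ultimately show "\<sigma> \<in> (\<Union>p\<in>?Pairs. ?fiber p)" by (rule UN_I)
  next
    fix \<sigma> assume "\<sigma> \<in> (\<Union>p\<in>?Pairs. ?fiber p)"
    then obtain p where "p \<in> ?Pairs" "\<sigma> \<in> ?fiber p" by (rule UN_E)
    then show "\<sigma> \<in> ?L" by (cases p) simp
  qed
  moreover have "finite ?Pairs" by (rule finite_subset[of _ "?N \<times> ?N"]) auto
  moreover have "\<forall>p\<in>?Pairs. finite (?fiber p)"
  proof
    fix p show "finite (?fiber p)"
      by (rule finite_subset[of _ "{\<sigma>. \<sigma> permutes ?N}"]) (auto simp: finite_permutations)
  qed
  moreover have "\<forall>p\<in>?Pairs. \<forall>q\<in>?Pairs. p \<noteq> q \<longrightarrow> ?fiber p \<inter> ?fiber q = {}"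
    by (auto simp: prod_eq_iff)
  ultimately have "card ?L = (\<Sum>p\<in>?Pairs. card (?fiber p))"
    by (simp only: card_UN_disjoint)
  also have "\<dots> = (\<Sum>p\<in>?Pairs. fact n)"
  proof (rule sum.cong[OF refl])
    fix p assume p: "p \<in> ?Pairs"
    obtain u v where uv: "p = (u, v)" by (cases p)
    have "u \<in> ?N" "v \<in> ?N" "u \<noteq> v" using p uv by auto
    then show "card (?fiber p) = fact n" using card_permutes_with_values[of u n v] uv by simp
  qed
  finally show ?thesis by simp
qed

text \<open>The possible values \<open>(\<sigma> (n + 1), \<sigma> (n + 2))\<close> of a permutation \<open>\<sigma>\<close> of \<open>{1..n+2}\<close> with fewer
  than \<open>a\<close> of \<open>\<sigma> 1, \<dots>, \<sigma> n\<close> below \<open>\<sigma> (n + 2)\<close> and fewer than \<open>b\<close> below \<open>\<sigma> (n + 1)\<close>.\<close>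
definition rank_pairs :: "nat \<Rightarrow> nat \<Rightarrow> nat \<Rightarrow> (nat \<times> nat) set" where
  "rank_pairs n a b = {(u, v). u \<in> {1..Suc (Suc n)} \<and> v \<in> {1..Suc (Suc n)} \<and> u \<noteq> v
                         \<and> others_below u v < a \<and> others_below v u < b}"

lemma integral_ostat_mult_ostat_eq_card:
  assumes "a \<le> n + 1" "b \<le> n + 1"
  shows "(\<integral>x. ostat n x a * ostat n x b \<partial>cube n) = card (rank_pairs n a b) / ((real n + 1) * (real n + 2))"
proof -
  let ?\<Phi> = "\<lambda>\<sigma>. others_below (\<sigma> (Suc n)) (\<sigma> (Suc (Suc n))) < a \<and> others_below (\<sigma> (Suc (Suc n))) (\<sigma> (Suc n)) < b"
  have "(\<integral>x. ostat n x a * ostat n x b \<partial>cube n)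
      = measure (cube (Suc (Suc n))) {w\<in>space (cube (Suc (Suc n))).
          card {i\<in>{1..n}. w i \<le> w (Suc (Suc n))} < a \<and> card {i\<in>{1..n}. w i \<le> w (Suc n)} < b}"
    by (rule integral_ostat_mult_ostat[OF assms])
  also have "\<dots> = card {\<sigma>. \<sigma> permutes {1..Suc (Suc n)} \<and> ?\<Phi> \<sigma>} / fact (Suc (Suc n))"
  proof (rule measure_by_order_cells)
    fix \<sigma> x assume \<sigma>: "\<sigma> permutes {1..Suc (Suc n)}" and x: "x \<in> order_cell (Suc (Suc n)) \<sigma>"
    have "{i\<in>{1..n}. x i \<le> x k} = {i\<in>{1..n}. \<sigma> i \<le> \<sigma> k}" if "k \<in> {Suc n, Suc (Suc n)}" for k
      using coord_le_iff_in_order_cell[OF \<sigma> x] that by auto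
    then show "x \<in> {w\<in>space (cube (Suc (Suc n))). card {i\<in>{1..n}. w i \<le> w (Suc (Suc n))} < a
                 \<and> card {i\<in>{1..n}. w i \<le> w (Suc n)} < b} \<longleftrightarrow> ?\<Phi> \<sigma>"
      using x card_permutes_below[OF \<sigma>, of "Suc (Suc n)" "Suc n"] card_permutes_below[OF \<sigma>, of "Suc n" "Suc (Suc n)"]
      by (simp add: order_cell_def)
  qed measurable
  also have "\<dots> = fact n * real (card (rank_pairs n a b)) / fact (Suc (Suc n))"
    using card_permutes_last_two[of n "\<lambda>u v. others_below u v < a \<and> others_below v u < b"]
    by (simp add: rank_pairs_def)
  also have "(fact (Suc (Suc n)) :: real) = fact n * ((real n + 1) * (real n + 2))"
    by (simp add: algebra_simps)
  also have "fact n * real (card (rank_pairs n a b)) / \<dots> = card (rank_pairs n a b) / ((real n + 1) * (real n + 2))"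
    by (rule mult_divide_mult_cancel_left) simp
  finally show ?thesis .
qed

lemma card_rank_pairs_Suc:
  "card (rank_pairs n a (Suc b)) = card (rank_pairs n a b)
     + card {(u, v). u \<in> {1..Suc (Suc n)} \<and> v \<in> {1..Suc (Suc n)} \<and> u \<noteq> v
                      \<and> others_below u v < a \<and> others_below v u = b}"
proof -
  let ?N = "{1..Suc (Suc n)}"
  let ?new = "{(u, v). u \<in> ?N \<and> v \<in> ?N \<and> u \<noteq> v \<and> others_below u v < a \<and> others_below v u = b}"
  have "rank_pairs n a (Suc b) = rank_pairs n a b \<union> ?new" "rank_pairs n a b \<inter> ?new = {}"
    unfolding rank_pairs_def by auto
  moreover have "finite (rank_pairs n a b)" "finite ?new"
    unfolding rank_pairs_def by (auto intro: finite_subset[of _ "?N \<times> ?N"])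
  ultimately show ?thesis by (simp add: card_Un_disjoint)
qed

lemma card_others_below_eq:
  assumes "1 \<le> a" "a \<le> n" "b \<le> n"
  shows "card {(u, v). u \<in> {1..Suc (Suc n)} \<and> v \<in> {1..Suc (Suc n)} \<and> u \<noteq> v
                   \<and> others_below u v < a \<and> others_below v u = b} = a + of_bool (b < a)"
proof -
  have "{(u, v). u \<in> {1..Suc (Suc n)} \<and> v \<in> {1..Suc (Suc n)} \<and> u \<noteq> v
                 \<and> others_below u v < a \<and> others_below v u = b}
      = {b + 2} \<times> {1..min a (b + 1)} \<union> {b + 1} \<times> {b + 2..a + 1}"
    using assms unfolding others_below_def by (auto split: if_splits)
  also have "card \<dots> = min a (b + 1) + (a + 1 - (b + 1))"
    by (subst card_Un_disjoint) (auto simp: card_cartesian_product)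
  finally show ?thesis by auto
qed

lemma integrable_ostat_mult_ostat:
  assumes "a \<le> n + 1" "b \<le> n + 1"
  shows "integrable (cube n) (\<lambda>x. ostat n x a * ostat n x b)"
proof -
  interpret prob_space "cube n" by (rule prob_space_cube)
  show ?thesis
  proof (rule integrable_const_bound[where B=1])
    show "AE x in cube n. norm (ostat n x a * ostat n x b) \<le> 1"
      using assms by (intro AE_I2) (simp add: abs_mult mult_le_one ostat_bounds)
  qed (use ostat_measurable[OF assms(1)] ostat_measurable[OF assms(2)] in measurable)
qed

lemma influence_ostat:
  assumes "1 \<le> a" "a \<le> n" "1 \<le> k" "k \<le> n"
  shows "influence n (\<lambda>x. ostat n x a) k = of_bool (a = k)"
proof -
  let ?I = "\<lambda>b. \<integral>x. ostat n x a * ostat n x b \<partial>cube n"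
  let ?c = "\<lambda>b. real (card (rank_pairs n a b))"
  have I: "?I b = ?c b / ((real n + 1) * (real n + 2))" if "b \<le> n + 1" for b
    by (rule integral_ostat_mult_ostat_eq_card) (use assms that in simp_all)
  have "(\<integral>x. ostat n x a * (ostat n x (k + 1) - 2 * ostat n x k + ostat n x (k - 1)) \<partial>cube n)
      = ?I (k + 1) - 2 * ?I k + ?I (k - 1)"
    using assms by (simp add: algebra_simps integrable_ostat_mult_ostat)
  also have "\<dots> = (?c (k + 1) - 2 * ?c k + ?c (k - 1)) / ((real n + 1) * (real n + 2))"
    using assms by (simp add: I diff_divide_distrib add_divide_distrib)
  also have "?c (k + 1) - 2 * ?c k + ?c (k - 1) = - of_bool (a = k)"
  proof -
    obtain k' where k': "k = Suc k'" using assms(3) by (cases k) auto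
    show ?thesis
      using card_rank_pairs_Suc[of n a k] card_rank_pairs_Suc[of n a k']
        card_others_below_eq[of a n k] card_others_below_eq[of a n k'] assms k'
      by (auto split: if_splits)
  qed
  finally have "(\<integral>x. ostat n x a * (ostat n x (k + 1) - 2 * ostat n x k + ostat n x (k - 1)) \<partial>cube n)
      = - of_bool (a = k) / ((real n + 1) * (real n + 2))" by simp
  moreover have "(real n + 1) * (real n + 2) \<noteq> 0" by (simp add: add_nonneg_eq_0_iff)
  ultimately show ?thesis unfolding influence_def by (simp add: add.commute)
qed

lemma integrable_mult_ostat_diff2:
  assumes "f \<in> borel_measurable (cube n)" "\<And>x. x \<in> space (cube n) \<Longrightarrow> \<bar>f x\<bar> \<le> B" "k \<le> n"
  shows "integrable (cube n) (\<lambda>x. f x * (ostat n x (k + 1) - 2 * ostat n x k + ostat n x (k - 1)))"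
proof -
  interpret prob_space "cube n" by (rule prob_space_cube)
  have [measurable]: "(\<lambda>x. ostat n x (k + 1)) \<in> borel_measurable (cube n)"
    "(\<lambda>x. ostat n x k) \<in> borel_measurable (cube n)" "(\<lambda>x. ostat n x (k - 1)) \<in> borel_measurable (cube n)"
    using assms(3) by (auto intro: ostat_measurable)
  show ?thesis
  proof (rule integrable_const_bound[where B="B * 4"])
    show "AE x in cube n. norm (f x * (ostat n x (k + 1) - 2 * ostat n x k + ostat n x (k - 1))) \<le> B * 4"
    proof (intro AE_I2)
      fix x assume x: "x \<in> space (cube n)"
      have "k - 1 \<le> n + 1" "k \<le> n + 1" "k + 1 \<le> n + 1" using assms(3) by simp_all
      then have "\<bar>ostat n x (k + 1) - 2 * ostat n x k + ostat n x (k - 1)\<bar> \<le> 4"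
        using ostat_bounds[OF x order_refl] unfolding abs_le_iff by (smt (verit))
      then have "\<bar>f x\<bar> * \<bar>ostat n x (k + 1) - 2 * ostat n x k + ostat n x (k - 1)\<bar> \<le> B * 4"
        using assms(2)[OF x] by (intro mult_mono) (auto intro: order_trans[OF abs_ge_zero])
      then show "norm (f x * (ostat n x (k + 1) - 2 * ostat n x k + ostat n x (k - 1))) \<le> B * 4"
        by (simp add: abs_mult)
    qed
  qed (use assms(1,3) in measurable)
qed

lemma influence_sum:
  assumes "finite I"
    and "\<And>i. i \<in> I \<Longrightarrow> integrable (cube n) (\<lambda>x. f i x * (ostat n x (k + 1) - 2 * ostat n x k + ostat n x (k - 1)))"
  shows "influence n (\<lambda>x. \<Sum>i\<in>I. f i x) k = (\<Sum>i\<in>I. influence n (f i) k)"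
  unfolding influence_def sum_distrib_right sum_distrib_left[symmetric]
  using assms by (subst Bochner_Integration.integral_sum) simp_all

lemma influence_cmult: "influence n (\<lambda>x. c * f x) k = c * influence n f k"
  unfolding influence_def by (simp add: mult.assoc mult.left_commute)

lemma influence_cong_AE:
  assumes "AE x in cube n. f x = g x" "f \<in> borel_measurable (cube n)" "g \<in> borel_measurable (cube n)" "k \<le> n"
  shows "influence n f k = influence n g k"
proof -
  have [measurable]: "(\<lambda>x. ostat n x (k + 1)) \<in> borel_measurable (cube n)"
    "(\<lambda>x. ostat n x k) \<in> borel_measurable (cube n)" "(\<lambda>x. ostat n x (k - 1)) \<in> borel_measurable (cube n)"
    "f \<in> borel_measurable (cube n)" "g \<in> borel_measurable (cube n)"
    using assms(2-4) by (auto intro: ostat_measurable)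
  show ?thesis unfolding influence_def
    by (intro arg_cong[where f="\<lambda>r. _ * r"] integral_cong_AE) (use assms(1) in \<open>measurable, auto\<close>)
qed

lemma influence_os_eq:
  assumes S: "S \<subseteq> {1..n}" and T: "T \<subseteq> {1..n}" "card T = card S"
    and j: "1 \<le> j" "j \<le> card S" and "k \<le> n"
  shows "influence n (os j T) k = influence n (os j S) k"
proof -
  obtain \<pi> where \<pi>: "\<pi> permutes {1..n}" "\<pi> ` S = T"
    using ex_permutes_image_eq[OF _ S T(1)] T(2) by auto
  let ?D = "\<lambda>x. ostat n x (k + 1) - 2 * ostat n x k + ostat n x (k - 1)"
  have fin: "finite S" using S finite_subset by blast
  have [measurable]: "(\<lambda>x. ostat n x (k + 1)) \<in> borel_measurable (cube n)"
    "(\<lambda>x. ostat n x k) \<in> borel_measurable (cube n)" "(\<lambda>x. ostat n x (k - 1)) \<in> borel_measurable (cube n)"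
    "os j S \<in> borel_measurable (cube n)"
    using assms(6) fin j by (auto intro: ostat_measurable os_measurable)
  have "(\<integral>x. os j S x * ?D x \<partial>cube n) = (\<integral>x. os j S (\<lambda>i\<in>{1..n}. x (\<pi> i)) * ?D (\<lambda>i\<in>{1..n}. x (\<pi> i)) \<partial>cube n)"
    by (rule integral_cube_permute_coords[OF \<pi>(1)]) measurable
  also have "\<dots> = (\<integral>x. os j T x * ?D x \<partial>cube n)"
  proof (rule Bochner_Integration.integral_cong[OF refl])
    fix x
    have "os j S (\<lambda>i\<in>{1..n}. x (\<pi> i)) = os j T x"
      using S fin j \<pi> by (subst os_reindex[where \<pi>=\<pi>]) (auto intro: permutes_inj_on)
    moreover have "?D (\<lambda>i\<in>{1..n}. x (\<pi> i)) = ?D x"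
    proof -
      have "k + 1 \<le> n + 1" "k \<le> n + 1" "k - 1 \<le> n + 1" using assms(6) by simp_all
      then show ?thesis by (simp only: ostat_permute_coords[OF \<pi>(1)])
    qed
    ultimately show "os j S (\<lambda>i\<in>{1..n}. x (\<pi> i)) * ?D (\<lambda>i\<in>{1..n}. x (\<pi> i)) = os j T x * ?D x" by simp
  qed
  finally show ?thesis unfolding influence_def by simp
qed

lemma binomial_mult_influence_os:
  assumes S: "S \<subseteq> {1..n}" and j: "1 \<le> j" "j \<le> card S" and k: "1 \<le> k" "k \<le> n"
  shows "real (n choose card S) * influence n (os j S) k
       = real ((k - 1) choose (j - 1)) * real ((n - k) choose (card S - j))"
proof -
  let ?P = "{T. T \<subseteq> {1..n} \<and> card T = card S}"
  define c where "c a = real ((a - 1) choose (j - 1)) * real ((n - a) choose (card S - j))" for a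
  have os_T: "os j T \<in> borel_measurable (cube n)" "\<And>x. x \<in> space (cube n) \<Longrightarrow> \<bar>os j T x\<bar> \<le> 1"
    if "T \<in> ?P" for T
    using that j finite_subset[of T "{1..n}"] os_measurable[of T j] os_bounds[of _ n T j] by auto
  have ostat_a: "(\<lambda>x. c a * ostat n x a) \<in> borel_measurable (cube n)"
    "\<And>x. x \<in> space (cube n) \<Longrightarrow> \<bar>c a * ostat n x a\<bar> \<le> \<bar>c a\<bar>"
    if "a \<in> {1..n}" for a
    using that ostat_measurable[of a n n] ostat_bounds[of _ n n a] by (auto simp: abs_mult mult_left_le)
  have "real (n choose card S) * influence n (os j S) k = (\<Sum>T\<in>?P. influence n (os j T) k)"
    using influence_os_eq[OF S _ _ j k(2)] n_subsets[of "{1..n}" "card S"] by simp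
  also have "\<dots> = influence n (\<lambda>x. \<Sum>T\<in>?P. os j T x) k"
    using os_T k(2) by (intro influence_sum[symmetric] integrable_mult_ostat_diff2) auto
  also have "\<dots> = influence n (\<lambda>x. \<Sum>a=1..n. c a * ostat n x a) k"
  proof (rule influence_cong_AE)
    show "AE x in cube n. (\<Sum>T\<in>?P. os j T x) = (\<Sum>a=1..n. c a * ostat n x a)"
      using AE_cube_inj_on
    proof eventually_elim
      case (elim x)
      then show ?case
        using sum_os_subsets[OF elim j] by (simp add: c_def ostat_def)
    qed
    show "(\<lambda>x. \<Sum>T\<in>?P. os j T x) \<in> borel_measurable (cube n)"
      using os_T by (intro borel_measurable_sum) auto
    show "(\<lambda>x. \<Sum>a=1..n. c a * ostat n x a) \<in> borel_measurable (cube n)"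
      using ostat_a by (intro borel_measurable_sum) auto
  qed (rule k(2))
  also have "\<dots> = (\<Sum>a=1..n. influence n (\<lambda>x. c a * ostat n x a) k)"
    using ostat_a k(2) by (intro influence_sum integrable_mult_ostat_diff2) auto
  also have "\<dots> = (\<Sum>a=1..n. c a * of_bool (a = k))"
    using k by (intro sum.cong refl) (simp add: influence_cmult influence_ostat)
  also have "\<dots> = c k" using k by simp
  finally show ?thesis unfolding c_def .
qed

theorem proposition21:
  fixes n j k :: nat and S :: "nat set"
  assumes "n \<ge> 1" and "S \<subseteq> {1..n}" and "S \<noteq> {}"
    and "1 \<le> j" and "j \<le> card S" and "1 \<le> k" and "k \<le> n"
  shows "influence n (os j S) k =
    (if j \<le> k \<and> k - j \<le> n - card S
     then real ((k - 1) choose (j - 1)) * real ((n - k) choose (card S - j)) / real (n choose card S)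
     else 0)"
proof -
  have "card S \<le> n" using card_mono[OF _ assms(2)] by simp
  then have "real (n choose card S) \<noteq> 0" by simp
  then have "influence n (os j S) k
      = real ((k - 1) choose (j - 1)) * real ((n - k) choose (card S - j)) / real (n choose card S)"
    using binomial_mult_influence_os[OF assms(2,4,5,6,7)] by (simp add: field_simps)
  moreover have "(k - 1) choose (j - 1) = 0 \<or> (n - k) choose (card S - j) = 0"
    if "\<not> (j \<le> k \<and> k - j \<le> n - card S)"
    using that assms(4-7) \<open>card S \<le> n\<close> by auto
  ultimately show ?thesis by auto
qed

end
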